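(* Let $K>0$ and let $A,P,B,Q$ be points of $\mathbb S^3_K$ with $A\neq P$, $B\neq Q$. Let $M_1$ and $M_2$ be the midpoints of the shortests $AP$ and $BQ$, respectively. Then $\operatorname{cosq}_K(\overrightarrow{AP},\overrightarrow{BQ})=\operatorname{cosq}_K(\overrightarrow{AM_1},\overrightarrow{BM_2})$.
   Context: For $K>0$, $\mathbb S^3_K$ is the open hemisphere of radius $1/\sqrt K$ of the round 3-sphere with its intrinsic metric $\rho$ (all distances are $<\pi/\sqrt K$ and shortests are unique). Let $\kappa=\sqrt K$. For $A\neq P$, $B\neq Q$ put $x=\rho(A,P)$, $y=\rho(B,Q)$, $a=\rho(A,B)$, $b=\rho(P,Q)$, $d=\rho(P,B)$, $f=\rho(A,Q)$ and $$\operatorname{cosq}_K(\overrightarrow{AP},\overrightarrow{BQ})=\frac{\cos\kappa b+\cos\kappa x\cos\kappa y}{\sin\kappa x\sin\kappa y}-\frac{(\cos\kappa x+\cos\kappa d)(\cos\kappa y+\cos\kappa f)}{(1+\cos\kappa a)\sin\kappa x\sin\kappa y}.$$ *)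

theory Defs
  imports "HOL-Analysis.Analysis"
begin

text \<open>Model of S^3_K: the open hemisphere (last coordinate positive) of the round
 3-sphere of radius 1/sqrt K centred at the origin of R^4, with its intrinsic
 (great-circle arc length) metric.\<close>

definition sphK :: "real \<Rightarrow> (real^4) set" where
  "sphK K = {x. norm x = 1 / sqrt K \<and> x $ 4 > 0}"

definition rhoK :: "real \<Rightarrow> real^4 \<Rightarrow> real^4 \<Rightarrow> real" where
  "rhoK K x y = arccos (K * (x \<bullet> y)) / sqrt K"

text \<open>M is the midpoint of the shortest XY (shortests are unique in S^3_K).\<close>
definition is_midpointK :: "real \<Rightarrow> real^4 \<Rightarrow> real^4 \<Rightarrow> real^4 \<Rightarrow> bool" where
  "is_midpointK K X Y M \<longleftrightarrow> M \<in> sphK K \<and>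
     rhoK K X M = rhoK K X Y / 2 \<and> rhoK K M Y = rhoK K X Y / 2"

definition cosqK :: "real \<Rightarrow> real^4 \<Rightarrow> real^4 \<Rightarrow> real^4 \<Rightarrow> real^4 \<Rightarrow> real" where
  "cosqK K A P B Q =
    (let k = sqrt K;
         x = rhoK K A P; y = rhoK K B Q; a = rhoK K A B;
         b = rhoK K P Q; d = rhoK K P B; f = rhoK K A Q
     in (cos (k*b) + cos (k*x) * cos (k*y)) / (sin (k*x) * sin (k*y))
        - ((cos (k*x) + cos (k*d)) * (cos (k*y) + cos (k*f)))
          / ((1 + cos (k*a)) * sin (k*x) * sin (k*y)))"

end

theory Submission
  imports Defs
begin

text \<open>In the model \<open>cos (\<kappa> \<rho>(X,Y)) = K (X \<bullet> Y)\<close>, and with \<open>t = \<kappa> \<rho>(A,P)\<close> the midpoint is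
  \<open>M\<^sub>1 = (A + P) / (2 cos (t/2))\<close>. So every cosine of a distance from \<open>M\<^sub>1\<close> is a linear
  combination of cosines of distances from \<open>A\<close> and \<open>P\<close>, and likewise for \<open>M\<^sub>2\<close>. Substituting
  these, together with \<open>cos t = 2 cos\<^sup>2(t/2) - 1\<close> and \<open>sin t = 2 sin(t/2) cos(t/2)\<close>, turns the
  two sides of the claim into the same rational function.\<close>

lemma inner_self_sphK:
  assumes "K > 0" "X \<in> sphK K"
  shows "X \<bullet> X = 1 / K"
proof -
  have "X \<bullet> X = (1 / sqrt K)\<^sup>2"
    using assms(2) by (simp add: sphK_def flip: power2_norm_eq_inner)
  with assms(1) show ?thesis by (simp add: power_divide)
qed

lemma abs_inner_sphK_le:
  assumes "K > 0" "X \<in> sphK K" "Y \<in> sphK K"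
  shows "\<bar>K * (X \<bullet> Y)\<bar> \<le> 1"
proof -
  have "\<bar>X \<bullet> Y\<bar> \<le> norm X * norm Y" by (rule Cauchy_Schwarz_ineq2)
  also have "\<dots> = 1 / K"
    using assms by (simp add: sphK_def flip: real_sqrt_mult)
  finally show ?thesis using assms(1) by (simp add: abs_mult field_simps)
qed

lemma cos_rhoK:
  assumes "K > 0" "X \<in> sphK K" "Y \<in> sphK K"
  shows "cos (sqrt K * rhoK K X Y) = K * (X \<bullet> Y)"
  using abs_inner_sphK_le[OF assms] assms(1) by (simp add: rhoK_def cos_arccos_abs)

text \<open>The open hemisphere contains no pair of antipodal points.\<close>

lemma inner_sphK_gt:
  assumes "K > 0" "X \<in> sphK K" "Y \<in> sphK K"
  shows "K * (X \<bullet> Y) > -1"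
proof (rule ccontr)
  assume "\<not> ?thesis"
  with abs_inner_sphK_le[OF assms] have "X \<bullet> Y = - 1 / K"
    using assms(1) by (simp add: field_simps)
  then have "(X + Y) \<bullet> (X + Y) = 0"
    using inner_self_sphK[OF assms(1,2)] inner_self_sphK[OF assms(1,3)]
    by (simp add: inner_add inner_commute)
  then have "Y $ 4 = - X $ 4"
    by (metis add_eq_0_iff inner_eq_zero_iff vector_add_component zero_index)
  with assms(2,3) show False by (simp add: sphK_def)
qed

lemma inner_sphK_lt:
  assumes "K > 0" "X \<in> sphK K" "Y \<in> sphK K" "X \<noteq> Y"
  shows "K * (X \<bullet> Y) < 1"
proof (rule ccontr)
  assume "\<not> ?thesis"
  with abs_inner_sphK_le[OF assms(1-3)] have "X \<bullet> Y = 1 / K"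
    using assms(1) by (simp add: field_simps)
  then have "(X - Y) \<bullet> (X - Y) = 0"
    using inner_self_sphK[OF assms(1,2)] inner_self_sphK[OF assms(1,3)]
    by (simp add: inner_diff inner_commute)
  with assms(4) show False by simp
qed

lemma sqrt_rhoK_bounds:
  assumes "K > 0" "X \<in> sphK K" "Y \<in> sphK K" "X \<noteq> Y"
  shows "0 < sqrt K * rhoK K X Y" "sqrt K * rhoK K X Y < pi"
  using arccos_lt_bounded[of "K * (X \<bullet> Y)"] inner_sphK_gt[OF assms(1-3)] inner_sphK_lt[OF assms]
    assms(1) by (auto simp: rhoK_def)

lemma half_rhoK_midpointK:
  assumes "K > 0" "is_midpointK K X Y M"
  shows "sqrt K * rhoK K X M = sqrt K * rhoK K X Y / 2"
    and "sqrt K * rhoK K M Y = sqrt K * rhoK K X Y / 2"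
  using assms(2) by (simp_all add: is_midpointK_def)

text \<open>\<open>M\<close> has norm \<open>1/\<surd>K\<close> and inner product \<open>cos(t/2)/K\<close> with both \<open>X\<close> and \<open>Y\<close>; the vector
  \<open>v = (X + Y) / (2 cos(t/2))\<close> then satisfies \<open>\<parallel>M - v\<parallel>\<^sup>2 = 0\<close>.\<close>

lemma midpointK_eq:
  assumes K: "K > 0" and XY: "X \<in> sphK K" "Y \<in> sphK K" "X \<noteq> Y"
    and M: "is_midpointK K X Y M"
  shows "M = (1 / (2 * cos (sqrt K * rhoK K X Y / 2))) *\<^sub>R (X + Y)"
proof -
  define t where "t = sqrt K * rhoK K X Y"
  define c where "c = cos (t / 2)"
  define v where "v = (1 / (2 * c)) *\<^sub>R (X + Y)"
  have c_pos: "c > 0"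
    unfolding c_def t_def using sqrt_rhoK_bounds[OF K XY] by (intro cos_gt_zero_pi) auto
  have Ms: "M \<in> sphK K" using M by (simp add: is_midpointK_def)
  have "K * (X \<bullet> M) = c"
    using cos_rhoK[OF K XY(1) Ms] half_rhoK_midpointK(1)[OF K M] by (simp add: c_def t_def)
  moreover have "K * (M \<bullet> Y) = c"
    using cos_rhoK[OF K Ms XY(2)] half_rhoK_midpointK(2)[OF K M] by (simp add: c_def t_def)
  ultimately have XM: "X \<bullet> M = c / K" and YM: "Y \<bullet> M = c / K"
    using K by (simp_all add: field_simps inner_commute)
  have "K * (X \<bullet> Y) = 2 * c\<^sup>2 - 1"
    using cos_rhoK[OF K XY(1,2)] cos_double_cos[of "t / 2"] by (simp add: c_def t_def)
  then have XY_inner: "X \<bullet> Y = (2 * c\<^sup>2 - 1) / K"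
    using K by (simp add: field_simps)
  have "(M - v) \<bullet> (M - v) = M \<bullet> M - (1 / c) * (X \<bullet> M + Y \<bullet> M)
          + (1 / (2 * c))\<^sup>2 * (X \<bullet> X + 2 * (X \<bullet> Y) + Y \<bullet> Y)"
    unfolding v_def by (simp add: inner_diff inner_add inner_commute algebra_simps power2_eq_square)
  also have "\<dots> = 0"
    unfolding XM YM XY_inner inner_self_sphK[OF K Ms] inner_self_sphK[OF K XY(1)]
      inner_self_sphK[OF K XY(2)]
    using c_pos K by (simp add: field_simps power2_eq_square)
  finally show ?thesis by (simp add: v_def c_def t_def)
qed

lemma cosq_half_angle_identity:
  fixes ab aq pb pq c1 c2 s1 s2 :: real
  assumes "1 + ab \<noteq> 0" "c1 \<noteq> 0" "c2 \<noteq> 0" "s1 \<noteq> 0" "s2 \<noteq> 0"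
  shows "(pq + (2 * c1\<^sup>2 - 1) * (2 * c2\<^sup>2 - 1)) / (2 * s1 * c1 * (2 * s2 * c2))
      - ((2 * c1\<^sup>2 - 1) + pb) * ((2 * c2\<^sup>2 - 1) + aq) / ((1 + ab) * (2 * s1 * c1) * (2 * s2 * c2))
    = ((ab + aq + pb + pq) / (4 * c1 * c2) + c1 * c2) / (s1 * s2)
      - (c1 + (ab + pb) / (2 * c1)) * (c2 + (ab + aq) / (2 * c2)) / ((1 + ab) * s1 * s2)"
proof -
  define u where "u = 1 + ab"
  have ab: "ab = u - 1" and "u \<noteq> 0" using assms(1) by (simp_all add: u_def)
  then show ?thesis
    unfolding ab using assms(2-) by (simp add: field_simps) (simp add: algebra_simps power2_eq_square)
qed

theorem lemma3p2:
  fixes K :: real and A P B Q M1 M2 :: "real^4"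
  assumes "K > 0"
    and "A \<in> sphK K" "P \<in> sphK K" "B \<in> sphK K" "Q \<in> sphK K"
    and "A \<noteq> P" "B \<noteq> Q"
    and "is_midpointK K A P M1" "is_midpointK K B Q M2"
  shows "cosqK K A P B Q = cosqK K A M1 B M2"
proof -
  note K = assms(1) and pts = assms(2-5)
  define t1 where "t1 = sqrt K * rhoK K A P"
  define t2 where "t2 = sqrt K * rhoK K B Q"
  define c1 where "c1 = cos (t1 / 2)"
  define s1 where "s1 = sin (t1 / 2)"
  define c2 where "c2 = cos (t2 / 2)"
  define s2 where "s2 = sin (t2 / 2)"
  have "0 < t1" "t1 < pi" "0 < t2" "t2 < pi"
    unfolding t1_def t2_def using sqrt_rhoK_bounds K pts assms(6,7) by auto
  then have pos: "c1 > 0" "c2 > 0" "s1 > 0" "s2 > 0"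
    unfolding c1_def s1_def c2_def s2_def by (auto intro!: cos_gt_zero_pi sin_gt_zero)
  have AB: "1 + K * (A \<bullet> B) > 0" using inner_sphK_gt[OF K assms(2,4)] by simp
  have M1s: "M1 \<in> sphK K" and M2s: "M2 \<in> sphK K"
    using assms(8,9) by (simp_all add: is_midpointK_def)
  have M1: "M1 = (1 / (2 * c1)) *\<^sub>R (A + P)" and M2: "M2 = (1 / (2 * c2)) *\<^sub>R (B + Q)"
    using midpointK_eq[OF K assms(2,3,6,8)] midpointK_eq[OF K assms(4,5,7,9)]
    by (simp_all add: c1_def c2_def t1_def t2_def)
  have M1M2: "K * (M1 \<bullet> M2) =
      (K * (A \<bullet> B) + K * (A \<bullet> Q) + K * (P \<bullet> B) + K * (P \<bullet> Q)) / (4 * c1 * c2)"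
    and M1B: "K * (M1 \<bullet> B) = (K * (A \<bullet> B) + K * (P \<bullet> B)) / (2 * c1)"
    and AM2: "K * (A \<bullet> M2) = (K * (A \<bullet> B) + K * (A \<bullet> Q)) / (2 * c2)"
    unfolding M1 M2 by (simp_all add: inner_add algebra_simps add_divide_distrib)
  show ?thesis
    unfolding cosqK_def Let_def half_rhoK_midpointK(1)[OF K assms(8)]
      half_rhoK_midpointK(1)[OF K assms(9)] t1_def[symmetric] t2_def[symmetric]
      cos_double_cos[of "t1 / 2", simplified] sin_double[of "t1 / 2", simplified]
      cos_double_cos[of "t2 / 2", simplified] sin_double[of "t2 / 2", simplified]
      c1_def[symmetric] c2_def[symmetric] s1_def[symmetric] s2_def[symmetric]
      cos_rhoK[OF K pts(1) M2s] cos_rhoK[OF K M1s pts(3)] cos_rhoK[OF K M1s M2s]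
      cos_rhoK[OF K pts(1) pts(3)] cos_rhoK[OF K pts(1) pts(4)] cos_rhoK[OF K pts(2) pts(3)]
      cos_rhoK[OF K pts(2) pts(4)] M1M2 M1B AM2
    using pos AB by (intro cosq_half_angle_identity) auto
qed

end
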